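(* Let $\mathcal S$ be an input-altering letter-to-letter transducer over $\Sigma$. Let $\alpha_0(\cdot)$ be the construction below, let $\mathcal T_1=\alpha_0(\mathcal S)$ and $\mathcal T_2=(\alpha_0(\mathcal S^{-1}))^{-1}$. Then (1) $|\alpha_0(\mathcal S)|=\Theta(|\mathcal S|)$, and (2) $\{R(\mathcal T_1),R(\mathcal T_2)\}$ is a rational asymmetric partition of $R(\mathcal S)$. Construction: for a letter-to-letter transducer $\mathcal S=(Q,\Sigma,T,I,F)$, $\alpha_0(\mathcal S)=(Q',\Sigma,T',I',F')$ where $Q'=Q^\lambda\cup Q^A\cup Q^R$ (three disjoint copies of $Q$), $I'=I^\lambda$, $F'=F^A$, and $T'$ consists of: $(p^c,\sigma/\tau,q^c)$ for every $(p,\sigma/\tau,q)\in T$ and $c\in\{A,R\}$; $(p^\lambda,\sigma/\sigma,q^\lambda)$ for every $(p,\sigma/\sigma,q)\in T$; $(p^\lambda,\sigma/\tau,q^A)$ for every $(p,\sigma/\tau,q)\in T$ with $\sigma>_r\tau$; $(p^\lambda,\sigma/\tau,q^R)$ for every $(p,\sigma/\tau,q)\in T$ with $\sigma<_r\tau$.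
   Context: A transducer is a quintuple $\mathcal T=(Q,\Sigma,E,I,F)$ where $Q$ is a finite set of states, $\Sigma$ is a finite alphabet, $E\subseteq Q\times\{x/y : x,y\in\Sigma\cup\{\lambda\}\}\times Q$ is a finite set of transitions ($\lambda$ the empty word), $I\subseteq Q$ nonempty initial states, $F\subseteq Q$ final states. Paths, labels (concatenation of input parts / output parts), computations (empty or starting at an initial state), accepting computations (empty with $I\cap F\ne\emptyset$, or nonempty ending in a final state) are as usual, and $R(\mathcal T)$ is the set of labels of accepting computations. The size $|\mathcal T|$ is the number of states plus the number of transitions. $\mathcal T^{-1}$ is the transducer obtained by swapping input and output in every label, so $R(\mathcal T^{-1})=R(\mathcal T)^{-1}=\{y/x : x/y\in R(\mathcal T)\}$. A transducer is letter-to-letter if all labels are $\sigma/\tau$ with $\sigma,\tau\in\Sigma$, and input-altering if $R(\mathcal T)$ is irreflexive (contains no pair $u/u$). A relation is rational if it is realized by some transducer. A relation $A$ is asymmetric if $x/y\in A$ implies $y/x\notin A$. An asymmetric partition of an irreflexive relation $I$ is a partition $\{A,B\}$ of $I$ with $A,B$ asymmetric; it is rational if $A,B$ are rational. The alphabet is $\Sigma=\{0,1,\dots,q-1\}$ with its natural order; the radix order: $u<_r v$ iff $|u|<|v|$, or $|u|=|v|$ and $u$ precedes $v$ lexicographically. *)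

theory Defs
  imports Complex_Main
begin

text \<open>Letters are natural numbers; the alphabet is {0..<q}. A word is a list of letters.
  A label x/y with x,y in Sigma or empty is a pair of words of length at most 1.\<close>

type_synonym word = "nat list"
type_synonym label = "word \<times> word"

record 'q transducer =
  states :: "'q set"
  alph   :: "nat set"
  trans  :: "('q \<times> label \<times> 'q) set"
  init   :: "'q set"
  fin    :: "'q set"

definition wf_transducer :: "('q, 'z) transducer_scheme \<Rightarrow> bool" where
  "wf_transducer T \<longleftrightarrow>
     finite (states T) \<and> (\<exists>q::nat. alph T = {0..<q}) \<and>
     trans T \<subseteq> states T \<times> {(x, y). length x \<le> 1 \<and> length y \<le> 1 \<and>
                                  set x \<subseteq> alph T \<and> set y \<subseteq> alph T} \<times> states T \<and>
     finite (trans T) \<and>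
     init T \<noteq> {} \<and> init T \<subseteq> states T \<and> fin T \<subseteq> states T"

inductive path :: "('q, 'z) transducer_scheme \<Rightarrow> 'q \<Rightarrow> word \<Rightarrow> word \<Rightarrow> 'q \<Rightarrow> bool"
  for T where
  path_empty: "path T p [] [] p"
| path_step: "(p, (x, y), r) \<in> trans T \<Longrightarrow> path T r u v q \<Longrightarrow> path T p (x @ u) (y @ v) q"

text \<open>Labels of accepting computations (the empty computation at a state in I \<inter> F gives (\<lambda>,\<lambda>)).\<close>
definition R :: "('q, 'z) transducer_scheme \<Rightarrow> (word \<times> word) set" where
  "R T = {(u, v). \<exists>i\<in>init T. \<exists>f\<in>fin T. path T i u v f}"

definition tsize :: "('q, 'z) transducer_scheme \<Rightarrow> nat" where
  "tsize T = card (states T) + card (trans T)"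

definition tinv :: "'q transducer \<Rightarrow> 'q transducer" where
  "tinv T = T\<lparr>trans := {(p, (y, x), q) | p x y q. (p, (x, y), q) \<in> trans T}\<rparr>"

definition letter_to_letter :: "('q, 'z) transducer_scheme \<Rightarrow> bool" where
  "letter_to_letter T \<longleftrightarrow> (\<forall>(p, (x, y), q) \<in> trans T. length x = 1 \<and> length y = 1)"

definition input_altering :: "('q, 'z) transducer_scheme \<Rightarrow> bool" where
  "input_altering T \<longleftrightarrow> (\<forall>u. (u, u) \<notin> R T)"

definition asymmetric :: "(word \<times> word) set \<Rightarrow> bool" where
  "asymmetric A \<longleftrightarrow> (\<forall>x y. (x, y) \<in> A \<longrightarrow> (y, x) \<notin> A)"

definition irreflexive_rel :: "(word \<times> word) set \<Rightarrow> bool" where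
  "irreflexive_rel A \<longleftrightarrow> (\<forall>x. (x, x) \<notin> A)"

text \<open>A rational relation over alphabet Sigma: realized by some transducer (states taken in nat,
  which loses no generality since state sets are finite).\<close>
definition rational :: "nat set \<Rightarrow> (word \<times> word) set \<Rightarrow> bool" where
  "rational \<Sigma> A \<longleftrightarrow> (\<exists>T :: nat transducer. wf_transducer T \<and> alph T = \<Sigma> \<and> R T = A)"

definition asym_partition :: "(word \<times> word) set \<Rightarrow> (word \<times> word) set \<Rightarrow> (word \<times> word) set \<Rightarrow> bool" where
  "asym_partition I A B \<longleftrightarrow> A \<union> B = I \<and> A \<inter> B = {} \<and> asymmetric A \<and> asymmetric B"

definition rational_asym_partition ::
  "nat set \<Rightarrow> (word \<times> word) set \<Rightarrow> (word \<times> word) set \<Rightarrow> (word \<times> word) set \<Rightarrow> bool" where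
  "rational_asym_partition \<Sigma> I A B \<longleftrightarrow> asym_partition I A B \<and> rational \<Sigma> A \<and> rational \<Sigma> B"

definition radix_less :: "word \<Rightarrow> word \<Rightarrow> bool" where
  "radix_less u v \<longleftrightarrow> length u < length v \<or>
     (length u = length v \<and> (u, v) \<in> lexord {(a, b). a < b})"

datatype tag = Lam | Acc | Rej

definition alpha0 :: "'q transducer \<Rightarrow> ('q \<times> tag) transducer" where
  "alpha0 S = \<lparr> states = states S \<times> {Lam, Acc, Rej},
     alph = alph S,
     trans = {((p, c), l, (q, c)) | p l q c. (p, l, q) \<in> trans S \<and> c \<in> {Acc, Rej}}
           \<union> {((p, Lam), (x, x), (q, Lam)) | p x q. (p, (x, x), q) \<in> trans S}
           \<union> {((p, Lam), (x, y), (q, Acc)) | p x y q. (p, (x, y), q) \<in> trans S \<and> radix_less y x}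
           \<union> {((p, Lam), (x, y), (q, Rej)) | p x y q. (p, (x, y), q) \<in> trans S \<and> radix_less x y},
     init = init S \<times> {Lam},
     fin = fin S \<times> {Acc} \<rparr>"

end

theory Submission
  imports Defs "HOL-Library.List_Lexorder"
begin

text \<open>In a letter-to-letter transducer the two tapes of every path have equal length. A path of
  \<open>alpha0 S\<close> from the \<open>Lam\<close> copy to the \<open>Acc\<close> copy follows a path of \<open>S\<close> copying letters until
  the first position where input and output differ, jumps to \<open>Acc\<close> exactly when the output letter
  is the smaller one there, and then stays in \<open>Acc\<close>. Hence \<open>R (alpha0 S)\<close> consists of the pairs
  \<open>(u, v)\<close> of \<open>R S\<close> with \<open>v < u\<close> lexicographically, and dually the inverted construction yields
  those with \<open>u < v\<close>. As \<open>R S\<close> is irreflexive and the lexicographic order is a strict linear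
  order, the two relations form an asymmetric partition of \<open>R S\<close>. The size bound holds because
  \<open>alpha0 S\<close> has three copies of every state and at most nine copies of every transition.\<close>

lemma letter_to_letterD:
  assumes "letter_to_letter S" and "(p, (x, y), q) \<in> trans S"
  obtains a b where "x = [a]" and "y = [b]"
  using assms unfolding letter_to_letter_def by (fastforce simp: length_Suc_conv)

lemma radix_less_singleton [simp]: "radix_less [a] [b] \<longleftrightarrow> a < b"
  by (simp add: radix_less_def)

lemma trans_tinv_iff: "(p, (x, y), q) \<in> trans (tinv T) \<longleftrightarrow> (p, (y, x), q) \<in> trans T"
  by (auto simp: tinv_def)

lemma path_tinv_iff: "path (tinv T) p u v q \<longleftrightarrow> path T p v u q"
proof
  show "path (tinv T) p u v q \<Longrightarrow> path T p v u q"
    by (induction rule: path.induct) (auto intro: path.intros simp: trans_tinv_iff)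
  show "path T p v u q \<Longrightarrow> path (tinv T) p u v q"
    by (induction rule: path.induct) (auto intro: path.intros simp: trans_tinv_iff)
qed

lemma init_tinv [simp]: "init (tinv T) = init T"
  and fin_tinv [simp]: "fin (tinv T) = fin T"
  and alph_tinv [simp]: "alph (tinv T) = alph T"
  by (simp_all add: tinv_def)

lemma R_tinv: "R (tinv T) = (R T)\<inverse>"
  by (auto simp: R_def path_tinv_iff)

lemma letter_to_letter_tinv: "letter_to_letter T \<Longrightarrow> letter_to_letter (tinv T)"
  unfolding letter_to_letter_def tinv_def by auto

lemma wf_transducer_tinv:
  assumes "wf_transducer T"
  shows "wf_transducer (tinv T)"
proof -
  have "trans (tinv T) = (\<lambda>(p, (x, y), q). (p, (y, x), q)) ` trans T"
    unfolding tinv_def by (force simp: image_iff)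
  with assms show ?thesis
    unfolding wf_transducer_def by (auto simp: tinv_def)
qed

definition rename_states :: "('a \<Rightarrow> 'b) \<Rightarrow> 'a transducer \<Rightarrow> 'b transducer" where
  "rename_states f T = \<lparr>states = f ` states T, alph = alph T,
     trans = (\<lambda>(p, l, q). (f p, l, f q)) ` trans T, init = f ` init T, fin = f ` fin T\<rparr>"

lemma path_rename_states: "path T p u v q \<Longrightarrow> path (rename_states f T) (f p) u v (f q)"
proof (induction rule: path.induct)
  case (path_empty p)
  show ?case by (rule path.path_empty)
next
  case (path_step p x y r u v q)
  then have "(f p, (x, y), f r) \<in> trans (rename_states f T)"
    unfolding rename_states_def by force
  from path.path_step[OF this path_step.IH] show ?case .
qed

lemma path_rename_statesD:
  assumes "path (rename_states f T) p' u v q'"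
    and "wf_transducer T" and "inj_on f (states T)" and "p \<in> states T" and "f p = p'"
  shows "\<exists>q\<in>states T. f q = q' \<and> path T p u v q"
  using assms
proof (induction arbitrary: p rule: path.induct)
  case (path_empty p')
  then show ?case by (auto intro: path.path_empty)
next
  case (path_step p' x y r' u v q' p)
  then obtain p0 r where t: "(p0, (x, y), r) \<in> trans T" "f p0 = p'" "f r = r'"
    unfolding rename_states_def by auto
  with path_step.prems(1) have "p0 \<in> states T" "r \<in> states T"
    unfolding wf_transducer_def by blast+
  with path_step.prems t have "p0 = p"
    by (metis inj_on_def)
  from path_step.IH[OF path_step.prems(1,2) \<open>r \<in> states T\<close> t(3)] t \<open>p0 = p\<close>
  show ?case by (blast intro: path.path_step)
qed

lemma R_rename_states:
  assumes "wf_transducer T" and "inj_on f (states T)"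
  shows "R (rename_states f T) = R T"
proof (intro set_eqI iffI)
  fix z
  assume "z \<in> R (rename_states f T)"
  then obtain u v i j where z: "z = (u, v)" "i \<in> init T" "j \<in> fin T"
    and p: "path (rename_states f T) (f i) u v (f j)"
    unfolding R_def rename_states_def by auto
  with assms(1) have "i \<in> states T" "j \<in> states T"
    unfolding wf_transducer_def by auto
  with path_rename_statesD[OF p assms] assms(2) have "path T i u v j"
    by (metis inj_on_def)
  with z show "z \<in> R T" unfolding R_def by auto
next
  fix z
  assume "z \<in> R T"
  then show "z \<in> R (rename_states f T)"
    unfolding R_def by (force simp: rename_states_def dest: path_rename_states[of _ _ _ _ _ f])
qed

lemma wf_transducer_rename_states:
  "wf_transducer T \<Longrightarrow> wf_transducer (rename_states f T)"
  unfolding wf_transducer_def rename_states_def by (auto 4 4 simp: image_iff)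

text \<open>The definition of rationality fixes \<open>nat\<close> as the type of states, so states have to be
  renamed injectively into \<open>nat\<close>.\<close>

lemma rational_R:
  assumes "wf_transducer (T :: 'a transducer)"
  shows "rational (alph T) (R T)"
proof -
  have "finite (states T)"
    using assms by (simp add: wf_transducer_def)
  then obtain f :: "'a \<Rightarrow> nat" where "inj_on f (states T)"
    by (metis finite_imp_inj_to_nat_seg)
  moreover have "alph (rename_states f T) = alph T"
    by (simp add: rename_states_def)
  ultimately show ?thesis
    unfolding rational_def using assms
    by (metis wf_transducer_rename_states R_rename_states)
qed

lemma alpha0_simps [simp]:
  "states (alpha0 S) = states S \<times> UNIV"
  "alph (alpha0 S) = alph S"
  "init (alpha0 S) = init S \<times> {Lam}"
  "fin (alpha0 S) = fin S \<times> {Acc}"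
  by (auto simp: alpha0_def intro: tag.exhaust)

lemma trans_alpha0_iff:
  "((p, c), l, (q, d)) \<in> trans (alpha0 S) \<longleftrightarrow> (p, l, q) \<in> trans S \<and>
     (c = d \<and> c \<noteq> Lam \<or> c = Lam \<and> d = Lam \<and> fst l = snd l
      \<or> c = Lam \<and> d = Acc \<and> radix_less (snd l) (fst l)
      \<or> c = Lam \<and> d = Rej \<and> radix_less (fst l) (snd l))"
  unfolding alpha0_def by (cases l; cases c; cases d; auto)

lemma path_alpha0_imp_path: "path (alpha0 S) s u v t \<Longrightarrow> path S (fst s) u v (fst t)"
proof (induction rule: path.induct)
  case (path_empty p)
  show ?case by (rule path.path_empty)
next
  case (path_step p x y r u v q)
  then show ?case
    by (cases p; cases r) (auto simp: trans_alpha0_iff intro: path.path_step)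
qed

lemma path_alpha0_Rej: "path (alpha0 S) s u v t \<Longrightarrow> snd s = Rej \<Longrightarrow> snd t = Rej"
proof (induction rule: path.induct)
  case (path_step p x y r u v q)
  then show ?case
    by (cases p; cases r) (auto simp: trans_alpha0_iff)
qed simp

lemma path_alpha0_Acc: "path S p u v q \<Longrightarrow> path (alpha0 S) (p, Acc) u v (q, Acc)"
proof (induction rule: path.induct)
  case (path_empty p)
  show ?case by (rule path.path_empty)
next
  case (path_step p x y r u v q)
  then have "((p, Acc), (x, y), (r, Acc)) \<in> trans (alpha0 S)"
    by (simp add: trans_alpha0_iff)
  from path.path_step[OF this path_step.IH] show ?case .
qed

lemma path_alpha0_Lam_Acc_less:
  "path (alpha0 S) s u v t \<Longrightarrow> letter_to_letter S \<Longrightarrow> snd s = Lam \<Longrightarrow> snd t = Acc \<Longrightarrow> v < u"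
proof (induction rule: path.induct)
  case (path_step s x y r u v t)
  obtain p c where s: "s = (p, c)" by fastforce
  obtain q d where r: "r = (q, d)" by fastforce
  from path_step.hyps(1) have tr: "((p, c), (x, y), (q, d)) \<in> trans (alpha0 S)"
    using s r by simp
  then have "(p, (x, y), q) \<in> trans S"
    by (simp add: trans_alpha0_iff)
  with path_step.prems(1) obtain a b where xy: "x = [a]" "y = [b]"
    by (rule letter_to_letterD)
  show ?case
  proof (cases d)
    case Lam
    with tr path_step s r have "x = y" and "v < u"
      by (auto simp: trans_alpha0_iff)
    with xy show ?thesis by simp
  next
    case Acc
    with tr path_step.prems(2) s have "radix_less y x"
      by (auto simp: trans_alpha0_iff)
    with xy show ?thesis by simp
  next
    case Rej
    with path_alpha0_Rej[OF path_step.hyps(2)] path_step.prems(3) r show ?thesis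
      by simp
  qed
qed simp

lemma path_alpha0_Lam_AccI:
  "path S p u v q \<Longrightarrow> letter_to_letter S \<Longrightarrow> v < u \<Longrightarrow> path (alpha0 S) (p, Lam) u v (q, Acc)"
proof (induction rule: path.induct)
  case (path_step p x y r u v q)
  with path_step.prems(1) obtain a b where xy: "x = [a]" "y = [b]"
    by (auto elim: letter_to_letterD)
  show ?case
  proof (cases "b < a")
    case True
    with path_step.hyps(1) xy have "((p, Lam), (x, y), (r, Acc)) \<in> trans (alpha0 S)"
      by (simp add: trans_alpha0_iff)
    from path.path_step[OF this path_alpha0_Acc[OF path_step.hyps(2)]] show ?thesis .
  next
    case False
    with path_step.prems(2) xy have "a = b" and "v < u"
      by auto
    with path_step.hyps(1) xy have "((p, Lam), (x, y), (r, Lam)) \<in> trans (alpha0 S)"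
      by (simp add: trans_alpha0_iff)
    from path.path_step[OF this path_step.IH[OF path_step.prems(1) \<open>v < u\<close>]] show ?thesis .
  qed
qed simp

lemma R_alpha0:
  assumes "letter_to_letter S"
  shows "R (alpha0 S) = {(u, v) \<in> R S. v < u}"
proof (intro set_eqI iffI)
  fix z
  assume "z \<in> R (alpha0 S)"
  then obtain u v i j where "z = (u, v)" "i \<in> init S" "j \<in> fin S"
    and "path (alpha0 S) (i, Lam) u v (j, Acc)"
    unfolding R_def by auto
  with path_alpha0_imp_path path_alpha0_Lam_Acc_less[OF _ assms]
  show "z \<in> {(u, v) \<in> R S. v < u}"
    unfolding R_def by fastforce
next
  fix z
  assume "z \<in> {(u, v) \<in> R S. v < u}"
  with path_alpha0_Lam_AccI[OF _ assms] show "z \<in> R (alpha0 S)"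
    unfolding R_def by fastforce
qed

lemma UNIV_tag: "(UNIV :: tag set) = {Lam, Acc, Rej}"
  by (auto intro: tag.exhaust)

instance tag :: finite
  by standard (simp add: UNIV_tag)

lemma card_UNIV_tag: "card (UNIV :: tag set) = 3"
  by (simp add: UNIV_tag)

lemma trans_alpha0_subset:
  "trans (alpha0 S) \<subseteq> (\<lambda>((p, l, q), c, d). ((p, c), l, (q, d))) ` (trans S \<times> UNIV)"
proof
  fix z
  assume z: "z \<in> trans (alpha0 S)"
  obtain p c l q d where zz: "z = ((p, c), l, (q, d))"
    by (metis prod.collapse)
  with z have "(p, l, q) \<in> trans S"
    by (simp add: trans_alpha0_iff)
  then show "z \<in> (\<lambda>((p, l, q), c, d). ((p, c), l, (q, d))) ` (trans S \<times> UNIV)"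
    unfolding zz by (intro image_eqI[where x = "((p, l, q), (c, d))"]) auto
qed

lemma finite_trans_alpha0: "finite (trans S) \<Longrightarrow> finite (trans (alpha0 S))"
  by (rule finite_subset[OF trans_alpha0_subset]) simp

lemma card_trans_alpha0_le:
  assumes "finite (trans S)"
  shows "card (trans (alpha0 S)) \<le> 9 * card (trans S)"
proof -
  have fin: "finite (trans S \<times> (UNIV :: (tag \<times> tag) set))"
    using assms by simp
  have "card (trans (alpha0 S))
      \<le> card ((\<lambda>((p, l, q), c, d). ((p, c), l, (q, d))) ` (trans S \<times> (UNIV :: (tag \<times> tag) set)))"
    by (rule card_mono[OF _ trans_alpha0_subset]) (use fin in simp)
  also have "\<dots> \<le> card (trans S \<times> (UNIV :: (tag \<times> tag) set))"
    using fin by (rule card_image_le)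
  also have "\<dots> = 9 * card (trans S)"
    by (simp add: card_cartesian_product card_UNIV_tag flip: UNIV_Times_UNIV)
  finally show ?thesis .
qed

lemma card_trans_le_alpha0:
  assumes "finite (trans S)"
  shows "card (trans S) \<le> card (trans (alpha0 S))"
proof -
  let ?Acc_copy = "\<lambda>(p, l, q). ((p, Acc), l, (q, Acc))"
  have "inj_on ?Acc_copy (trans S)"
    by (auto simp: inj_on_def)
  then have "card (trans S) = card (?Acc_copy ` trans S)"
    by (simp add: card_image)
  also have "\<dots> \<le> card (trans (alpha0 S))"
    by (intro card_mono finite_trans_alpha0 assms) (auto simp: trans_alpha0_iff)
  finally show ?thesis .
qed

lemma tsize_alpha0_bounds:
  assumes "wf_transducer S"
  shows "tsize S \<le> tsize (alpha0 S)" and "tsize (alpha0 S) \<le> 9 * tsize S"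
proof -
  from assms have "finite (trans S)"
    by (simp add: wf_transducer_def)
  with card_trans_alpha0_le card_trans_le_alpha0
  show "tsize S \<le> tsize (alpha0 S)" and "tsize (alpha0 S) \<le> 9 * tsize S"
    by (fastforce simp: tsize_def card_cartesian_product card_UNIV_tag)+
qed

lemma wf_transducer_alpha0:
  assumes "wf_transducer S"
  shows "wf_transducer (alpha0 S)"
proof -
  have "trans (alpha0 S) \<subseteq> states (alpha0 S) \<times> {(x, y). length x \<le> 1 \<and> length y \<le> 1 \<and>
      set x \<subseteq> alph (alpha0 S) \<and> set y \<subseteq> alph (alpha0 S)} \<times> states (alpha0 S)"
    (is "_ \<subseteq> ?labelled_edges")
  proof
    fix z
    assume "z \<in> trans (alpha0 S)"
    moreover obtain p c l q d where z: "z = ((p, c), l, (q, d))"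
      by (metis prod.collapse)
    ultimately have "(p, l, q) \<in> trans S"
      by (simp add: trans_alpha0_iff)
    with assms show "z \<in> ?labelled_edges"
      unfolding z wf_transducer_def by auto
  qed
  with assms finite_trans_alpha0[of S] show ?thesis
    unfolding wf_transducer_def by auto
qed

lemma tsize_alpha0_Theta:
  "\<exists>c1 c2 :: real. c1 > 0 \<and> c2 > 0 \<and> (\<forall>S :: 'q transducer. wf_transducer S \<longrightarrow>
     c1 * real (tsize S) \<le> real (tsize (alpha0 S)) \<and> real (tsize (alpha0 S)) \<le> c2 * real (tsize S))"
proof -
  have bounds: "real (tsize S) \<le> real (tsize (alpha0 S)) \<and> real (tsize (alpha0 S)) \<le> 9 * real (tsize S)"
    if "wf_transducer S" for S :: "'q transducer"
    using tsize_alpha0_bounds[OF that] by (simp flip: of_nat_le_iff)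
  show ?thesis
    by (rule exI[of _ 1], rule exI[of _ 9]) (simp add: bounds tsize_alpha0_bounds)
qed

lemma asym_partition_lexicographic:
  assumes "irreflexive_rel I"
  shows "asym_partition I {(u, v) \<in> I. v < u} {(u, v) \<in> I. u < v}"
  using assms unfolding asym_partition_def asymmetric_def irreflexive_rel_def
  by (auto simp: not_less_iff_gr_or_eq)

theorem proposition1:
  fixes S :: "'q transducer"
  assumes "wf_transducer S" and "letter_to_letter S" and "input_altering S"
  shows "(\<exists>c1 c2 :: real. c1 > 0 \<and> c2 > 0 \<and>
            (\<forall>S' :: 'q transducer. wf_transducer S' \<and> letter_to_letter S' \<and> input_altering S' \<longrightarrow>
               c1 * real (tsize S') \<le> real (tsize (alpha0 S')) \<and>
               real (tsize (alpha0 S')) \<le> c2 * real (tsize S')))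
       \<and> rational_asym_partition (alph S) (R S) (R (alpha0 S)) (R (tinv (alpha0 (tinv S))))"
proof -
  have "R (alpha0 S) = {(u, v) \<in> R S. v < u}"
    using assms(2) by (rule R_alpha0)
  moreover have "R (tinv (alpha0 (tinv S))) = {(u, v) \<in> R S. u < v}"
    using R_alpha0[OF letter_to_letter_tinv[OF assms(2)]] by (auto simp: R_tinv)
  moreover have "irreflexive_rel (R S)"
    using assms(3) by (simp add: input_altering_def irreflexive_rel_def)
  ultimately have "asym_partition (R S) (R (alpha0 S)) (R (tinv (alpha0 (tinv S))))"
    by (simp add: asym_partition_lexicographic)
  moreover have "rational (alph S) (R (alpha0 S))"
    using rational_R[OF wf_transducer_alpha0[OF assms(1)]] by simp
  moreover have "rational (alph S) (R (tinv (alpha0 (tinv S))))"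
    using rational_R[OF wf_transducer_tinv[OF wf_transducer_alpha0[OF wf_transducer_tinv[OF assms(1)]]]]
    by simp
  ultimately show ?thesis
    unfolding rational_asym_partition_def using tsize_alpha0_Theta by fast
qed

end
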